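(* Let $n\ge1$ be an integer. There exists a constant $C=C(n)>0$ such that for all pairwise distinct points $z_1,z_2,z_3\in\mathbb{R}^2$ and $i=1,2$, $$p_i(z_1,z_2,z_3)\le C\,c(z_1,z_2,z_3)^2.$$
   Context: For $i=1,2$ and $x\in\mathbb{R}^2\setminus\{0\}$, $K_i(x)=x_i^{2n-1}/|x|^{2n}$, and $p_i(z_1,z_2,z_3)=K_i(z_1-z_2)K_i(z_1-z_3)+K_i(z_2-z_1)K_i(z_2-z_3)+K_i(z_3-z_1)K_i(z_3-z_2)$. The Menger curvature $c(z_1,z_2,z_3)$ is the inverse of the radius of the circle through $z_1,z_2,z_3$ (equal to $0$ if the points are collinear). *)

theory Defs
  imports "HOL-Analysis.Analysis"
begin

definition Kker :: "nat \<Rightarrow> 2 \<Rightarrow> real^2 \<Rightarrow> real" where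
  "Kker n i x = (x $ i) ^ (2*n - 1) / (norm x) ^ (2*n)"

definition pfun :: "nat \<Rightarrow> 2 \<Rightarrow> real^2 \<Rightarrow> real^2 \<Rightarrow> real^2 \<Rightarrow> real" where
  "pfun n i z1 z2 z3 =
     Kker n i (z1 - z2) * Kker n i (z1 - z3)
   + Kker n i (z2 - z1) * Kker n i (z2 - z3)
   + Kker n i (z3 - z1) * Kker n i (z3 - z2)"

definition menger :: "real^2 \<Rightarrow> real^2 \<Rightarrow> real^2 \<Rightarrow> real" where
  "menger z1 z2 z3 =
     (if collinear {z1, z2, z3} then 0
      else 1 / (THE r. \<exists>x. dist x z1 = r \<and> dist x z2 = r \<and> dist x z3 = r))"

end

theory Submission
  imports Defs
begin

(* Put p = z1 - z3 and q = z3 - z2; as K_i is odd, p_i = K(p+q) (K(p) + K(q)) - K(p) K(q), while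
   c^2 = 4 cross(p,q)^2 / (|p|^2 |q|^2 |p+q|^2).
   If the i-th coordinates of p, q and p+q are nonzero, then K(x) = 1 / (x_i h(s_x)), where s_x is the
   slope of x against the i-th axis and h(v) = (1 + v^2)^n. The slope of p+q is the mean of the slopes
   of p and q with weights p_i/(p+q)_i and q_i/(p+q)_i, so the numerator of p_i is a Jensen gap of h,
   that is a second divided difference of h. This gives p_i = (c^2/4) h[s_p,s_q,s_(p+q)] / P^(n-1) with
   P = (1 + s_p^2)(1 + s_q^2)(1 + s_(p+q)^2), and by Rolle the divided difference is h''(xi)/2, which is
   at most 2 n^2 (1 + xi^2)^(n-1) <= 2 n^2 P^(n-1). If one of the three coordinates vanishes, p_i is a
   single product +-K(x) K(y) with x_i = +-y_i, bounded by c^2/4 directly. So C = n^2/2 works. *)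

definition divided_diff2 :: "(real \<Rightarrow> real) \<Rightarrow> real \<Rightarrow> real \<Rightarrow> real \<Rightarrow> real" where
  "divided_diff2 h x y z = (h x * (y - z) - h y * (x - z) + h z * (x - y)) / ((x - y) * (x - z) * (y - z))"

lemma sorted_triple_exists:
  fixes x y z :: real
  assumes "x \<noteq> y" "x \<noteq> z" "y \<noteq> z"
  obtains a b c where "a < b" "b < c" "{a, b, c} = {x, y, z}"
proof -
  consider "x < y" "y < z" | "x < z" "z < y" | "y < x" "x < z" | "y < z" "z < x" | "z < x" "x < y" | "z < y" "y < x"
    using assms by linarith
  then show ?thesis by cases (use that in \<open>auto simp: insert_commute\<close>)
qed

lemma divided_diff2_Rolle:
  fixes h h1 h2 :: "real \<Rightarrow> real"
  assumes "x \<noteq> y" "x \<noteq> z" "y \<noteq> z"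
    and h1: "\<And>v. (h has_real_derivative h1 v) (at v)"
    and h2: "\<And>v. (h1 has_real_derivative h2 v) (at v)"
  shows "\<exists>\<xi>. min x (min y z) < \<xi> \<and> \<xi> < max x (max y z) \<and> divided_diff2 h x y z = h2 \<xi> / 2"
proof -
  define L where "L = (h y - h x) / (y - x)"
  define D where "D = divided_diff2 h x y z"
  \<comment> \<open>h minus its quadratic interpolant at x, y, z\<close>
  define g where "g v = h v - h x - L * (v - x) - D * (v - x) * (v - y)" for v
  define g1 where "g1 w = h1 w - L - D * (2 * w - x - y)" for w
  have dg: "(g has_real_derivative g1 v) (at v)" for v
    unfolding g_def g1_def
    by (rule derivative_eq_intros h1 refl | simp)+ (simp add: algebra_simps)
  have dg1: "(g1 has_real_derivative (h2 v - 2 * D)) (at v)" for v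
    unfolding g1_def by (rule derivative_eq_intros h2 refl | simp)+
  have "g x = 0" "g y = 0"
    using assms(1) by (simp_all add: g_def L_def field_simps)
  moreover have "g z = 0"
    using assms(1-3) unfolding g_def L_def D_def divided_diff2_def
    by (simp add: divide_simps) (simp add: algebra_simps)
  moreover obtain a b c where abc: "a < b" "b < c" "{a, b, c} = {x, y, z}"
    using sorted_triple_exists assms(1-3) by blast
  ultimately have g0: "g a = 0" "g b = 0" "g c = 0"
    by (metis insertCI insertE singletonD)+
  have Rolle: "\<exists>\<xi>>s. \<xi> < t \<and> f' \<xi> = 0"
    if "s < t" "f s = 0" "f t = 0" "\<And>v. (f has_real_derivative f' v) (at v)" for s t f f'
    using Rolle_deriv[of s t f "\<lambda>v w. f' v * w"] that
    by (auto simp: has_field_derivative_def fun_eq_iff intro!: continuous_at_imp_continuous_on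
        DERIV_isCont[OF that(4)])
  obtain \<alpha> where \<alpha>: "a < \<alpha>" "\<alpha> < b" "g1 \<alpha> = 0" using Rolle[OF \<open>a < b\<close> g0(1,2) dg] by blast
  obtain \<beta> where \<beta>: "b < \<beta>" "\<beta> < c" "g1 \<beta> = 0" using Rolle[OF \<open>b < c\<close> g0(2,3) dg] by blast
  obtain \<xi> where \<xi>: "\<alpha> < \<xi>" "\<xi> < \<beta>" "h2 \<xi> - 2 * D = 0"
    using Rolle[of \<alpha> \<beta> g1, OF _ \<alpha>(3) \<beta>(3) dg1] \<alpha> \<beta> by auto
  have "a \<in> {x, y, z}" "c \<in> {x, y, z}" using abc(3) by blast+
  then have "min x (min y z) \<le> a" "c \<le> max x (max y z)" by auto
  then show ?thesis using \<alpha> \<beta> \<xi> by (intro exI[of _ \<xi>]) (auto simp: D_def)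
qed

lemma has_real_derivative_one_plus_sq_power:
  fixes v :: real
  shows "((\<lambda>v. (1 + v^2)^n) has_real_derivative 2 * real n * v * (1 + v^2)^(n - 1)) (at v)"
    and "((\<lambda>v. 2 * real n * v * (1 + v^2)^(n - 1)) has_real_derivative
      2 * real n * ((1 + v^2)^(n - 1) + 2 * real (n - 1) * v^2 * (1 + v^2)^(n - 2))) (at v)"
proof -
  show "((\<lambda>v. (1 + v^2)^n) has_real_derivative 2 * real n * v * (1 + v^2)^(n - 1)) (at v)"
    by (rule derivative_eq_intros refl)+ simp
  have n2: "n - Suc (Suc 0) = n - 2" by simp
  show "((\<lambda>v. 2 * real n * v * (1 + v^2)^(n - 1)) has_real_derivative
      2 * real n * ((1 + v^2)^(n - 1) + 2 * real (n - 1) * v^2 * (1 + v^2)^(n - 2))) (at v)"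
    by (rule derivative_eq_intros refl)+ (simp add: algebra_simps power2_eq_square n2)
qed

lemma second_deriv_one_plus_sq_power_le:
  fixes v :: real
  shows "real n * ((1 + v^2)^(n - 1) + 2 * real (n - 1) * v^2 * (1 + v^2)^(n - 2))
           \<le> 2 * real n^2 * (1 + v^2)^(n - 1)"
proof (cases "n = 0")
  case False
  have "real (n - 1) * (v^2 * (1 + v^2)^(n - 2)) \<le> real (n - 1) * (1 + v^2)^(n - 1)"
  proof (cases "n \<ge> 2")
    case True
    then obtain m where "n = Suc (Suc m)" using add_2_eq_Suc le_Suc_ex by blast
    then have "(1 + v^2)^(n - 1) = (1 + v^2) * (1 + v^2)^(n - 2)" by simp
    then show ?thesis by (simp add: mult_left_mono mult_right_mono)
  next
    case False
    then have "n - 1 = 0" by simp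
    then show ?thesis by simp
  qed
  then have "real n * ((1 + v^2)^(n - 1) + 2 * real (n - 1) * v^2 * (1 + v^2)^(n - 2))
      \<le> real n * ((1 + 2 * real (n - 1)) * (1 + v^2)^(n - 1))"
    by (intro mult_left_mono) (auto simp: algebra_simps)
  also have "\<dots> \<le> real n * (2 * real n * (1 + v^2)^(n - 1))"
    using False by (intro mult_left_mono mult_right_mono) (auto simp: of_nat_diff)
  finally show ?thesis by (simp add: power2_eq_square mult.assoc)
qed simp

lemma sq_le_sum_sq_of_between:
  fixes \<xi> x y z :: real
  assumes "min x (min y z) < \<xi>" "\<xi> < max x (max y z)"
  shows "\<xi>^2 \<le> x^2 + y^2 + z^2"
proof -
  have "\<bar>\<xi>\<bar> \<le> \<bar>x\<bar> \<or> \<bar>\<xi>\<bar> \<le> \<bar>y\<bar> \<or> \<bar>\<xi>\<bar> \<le> \<bar>z\<bar>" using assms by linarith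
  then have "\<xi>^2 \<le> x^2 \<or> \<xi>^2 \<le> y^2 \<or> \<xi>^2 \<le> z^2" by (auto simp: abs_le_square_iff)
  then show ?thesis by (smt (verit) zero_le_power2)
qed

lemma divided_diff2_one_plus_sq_power_le:
  fixes x y z :: real
  shows "divided_diff2 (\<lambda>v. (1 + v^2)^n) x y z
           \<le> 2 * real n^2 * ((1 + x^2) * (1 + y^2) * (1 + z^2))^(n - 1)"
proof (cases "x \<noteq> y \<and> x \<noteq> z \<and> y \<noteq> z")
  case True
  then obtain \<xi> where \<xi>: "min x (min y z) < \<xi>" "\<xi> < max x (max y z)"
    and dd: "divided_diff2 (\<lambda>v. (1 + v^2)^n) x y z
               = real n * ((1 + \<xi>^2)^(n - 1) + 2 * real (n - 1) * \<xi>^2 * (1 + \<xi>^2)^(n - 2))"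
    using divided_diff2_Rolle[of x y z, OF _ _ _ has_real_derivative_one_plus_sq_power] True
    by auto
  have "1 + \<xi>^2 \<le> 1 + (x^2 + y^2 + z^2)"
    using sq_le_sum_sq_of_between[OF \<xi>] by simp
  also have "\<dots> \<le> (1 + x^2) * (1 + y^2) * (1 + z^2)"
    by (simp add: algebra_simps)
  finally have "(1 + \<xi>^2)^(n - 1) \<le> ((1 + x^2) * (1 + y^2) * (1 + z^2))^(n - 1)"
    by (intro power_mono) auto
  then have "2 * real n^2 * (1 + \<xi>^2)^(n - 1)
      \<le> 2 * real n^2 * ((1 + x^2) * (1 + y^2) * (1 + z^2))^(n - 1)"
    by (simp add: mult_left_mono)
  then show ?thesis
    unfolding dd using second_deriv_one_plus_sq_power_le[of n \<xi>] by linarith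
qed (auto simp: divided_diff2_def) \<comment> \<open>coincident points: the denominator is 0, hence so is divided_diff2\<close>

lemma convex_comb_gap_eq_divided_diff2:
  fixes h :: "real \<Rightarrow> real"
  shows "l * h x + (1 - l) * h y - h (l * x + (1 - l) * y)
           = l * (1 - l) * (x - y)^2 * divided_diff2 h x y (l * x + (1 - l) * y)"
proof (cases "l = 0 \<or> l = 1 \<or> x = y")
  case False
  define z where "z = l * x + (1 - l) * y"
  have xz: "x - z = (1 - l) * (x - y)" and yz: "y - z = - l * (x - y)"
    by (simp_all add: z_def algebra_simps)
  have "divided_diff2 h x y z
      = (- (x - y) * (l * h x + (1 - l) * h y - h z)) / (- (x - y) * (l * (1 - l) * (x - y)^2))"
    unfolding divided_diff2_def xz yz by (simp add: algebra_simps power2_eq_square)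
  also have "\<dots> = (l * h x + (1 - l) * h y - h z) / (l * (1 - l) * (x - y)^2)"
    using False by (intro mult_divide_mult_cancel_left) simp
  finally have "divided_diff2 h x y z
      = (l * h x + (1 - l) * h y - h z) / (l * (1 - l) * (x - y)^2)" .
  then show ?thesis using False by (simp flip: z_def)
qed (auto simp: algebra_simps)

text \<open>Kcoord n p q is K_i(x) for a point x with x_i = p whose other coordinate is q.\<close>

definition Kcoord :: "nat \<Rightarrow> real \<Rightarrow> real \<Rightarrow> real" where
  "Kcoord n p q = p^(2*n - 1) / (p^2 + q^2)^n"

lemma Kcoord_slope:
  assumes "n \<ge> 1" "p \<noteq> 0"
  shows "Kcoord n p q = 1 / (p * (1 + (q / p)^2)^n)"
proof -
  have "p^2 + q^2 = p^2 * (1 + (q / p)^2)" using assms(2) by (simp add: field_simps)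
  moreover have "(p^2)^n = p * p^(2*n - 1)"
    using assms(1) by (simp add: power_mult[symmetric] power_Suc[symmetric])
  ultimately show ?thesis
    unfolding Kcoord_def using assms(2) by (simp add: power_mult_distrib)
qed

lemma Kcoord_zero [simp]: "n \<ge> 1 \<Longrightarrow> Kcoord n 0 q = 0"
  by (simp add: Kcoord_def)

lemma Kcoord_uminus: "n \<ge> 1 \<Longrightarrow> Kcoord n (- p) q = - Kcoord n p q"
  by (simp add: Kcoord_def power_minus_odd)

lemma Kcoord_triangle_sum_eq:
  fixes p1 p2 q1 q2 :: real
  assumes n: "n \<ge> 1" and p1: "p1 \<noteq> 0" and q1: "q1 \<noteq> 0" and r1: "p1 + q1 \<noteq> 0"
  defines "s \<equiv> p2 / p1" and "t \<equiv> q2 / q1" and "u \<equiv> (p2 + q2) / (p1 + q1)"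
  shows "Kcoord n (p1 + q1) (p2 + q2) * (Kcoord n p1 p2 + Kcoord n q1 q2) - Kcoord n p1 p2 * Kcoord n q1 q2
    = (p1 * q2 - p2 * q1)^2 / ((p1^2 + p2^2) * (q1^2 + q2^2) * ((p1 + q1)^2 + (p2 + q2)^2))
      * (divided_diff2 (\<lambda>v. (1 + v^2)^n) s t u / ((1 + s^2) * (1 + t^2) * (1 + u^2))^(n - 1))"
proof -
  define H where "H v = (1 + v^2)^n" for v :: real
  define D where "D = divided_diff2 H s t u"
  define P where "P = (1 + s^2) * (1 + t^2) * (1 + u^2)"
  define r where "r = p1 + q1"
  have r: "r \<noteq> 0" using r1 by (simp add: r_def)
  have pos: "1 + v^2 \<noteq> 0" for v :: real by (smt (verit) zero_le_power2)
  have H: "H s \<noteq> 0" "H t \<noteq> 0" "H u \<noteq> 0" by (simp_all add: H_def pos)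
  have P: "P \<noteq> 0" by (simp add: P_def pos)
  have K: "Kcoord n p1 p2 = 1 / (p1 * H s)" "Kcoord n q1 q2 = 1 / (q1 * H t)"
    "Kcoord n (p1 + q1) (p2 + q2) = 1 / (r * H u)"
    using Kcoord_slope[OF n] p1 q1 r1 by (simp_all add: H_def s_def t_def u_def r_def)
  define l where "l = p1 / r"
  have l': "1 - l = q1 / r"
    using r by (simp add: l_def r_def field_simps)
  have u: "u = l * s + (1 - l) * t"
    unfolding l' using p1 q1 by (simp add: u_def l_def s_def t_def r_def add_divide_distrib)
  have "p1 * H s + q1 * H t - r * H u = r * (l * H s + (1 - l) * H t - H u)"
    using r unfolding l' unfolding l_def by (simp add: algebra_simps)
  also have "\<dots> = r * (l * (1 - l) * (s - t)^2 * D)"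
    using convex_comb_gap_eq_divided_diff2[of l H s t] by (simp add: D_def flip: u)
  also have "\<dots> = p1 * q1 / r * (s - t)^2 * D"
    using r unfolding l' unfolding l_def by (simp add: field_simps power2_eq_square)
  finally have gap: "p1 * H s + q1 * H t - r * H u = p1 * q1 / r * (s - t)^2 * D" .
  have "Kcoord n (p1 + q1) (p2 + q2) * (Kcoord n p1 p2 + Kcoord n q1 q2) - Kcoord n p1 p2 * Kcoord n q1 q2
      = (p1 * H s + q1 * H t - r * H u) / (p1 * q1 * r * (H s * H t * H u))"
    unfolding K using p1 q1 r H by (simp add: field_simps)
  also have "\<dots> = (s - t)^2 * D / (r^2 * (H s * H t * H u))"
    unfolding gap using p1 q1 r H by (simp add: field_simps power2_eq_square)
  also have "H s * H t * H u = P * P^(n - 1)"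
    using n by (cases n) (simp_all add: H_def P_def power_mult_distrib)
  also have "(s - t)^2 * D / (r^2 * (P * P^(n - 1)))
      = (p1 * q1 * (t - s))^2 / (p1^2 * q1^2 * r^2 * P) * (D / P^(n - 1))"
    using p1 q1 r P by (simp add: field_simps power2_eq_square)
  also have "p1 * q1 * (t - s) = p1 * q2 - p2 * q1"
    using p1 q1 by (simp add: s_def t_def field_simps)
  also have "p1^2 * q1^2 * r^2 * P
      = (p1^2 + p2^2) * (q1^2 + q2^2) * ((p1 + q1)^2 + (p2 + q2)^2)"
    using p1 q1 r unfolding P_def s_def t_def u_def r_def[symmetric]
    by (simp add: field_simps)
  finally show ?thesis by (simp only: D_def P_def H_def[abs_def])
qed

lemma Kcoord_mul_Kcoord_same_first_le:
  fixes x y z :: real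
  assumes n: "n \<ge> 1" and A: "x^2 + y^2 \<noteq> 0" and B: "x^2 + z^2 \<noteq> 0"
  shows "Kcoord n x y * Kcoord n x z \<le> x^2 / ((x^2 + y^2) * (x^2 + z^2))"
proof -
  define A B where "A = x^2 + y^2" and "B = x^2 + z^2"
  have "0 < A" "0 < B" "x^2 \<le> A" "x^2 \<le> B"
    using A B by (simp_all add: A_def B_def sum_power2_gt_zero_iff)
  have "Kcoord n x y * Kcoord n x z = x^2 / (A * B) * ((x^2 / A)^(n - 1) * (x^2 / B)^(n - 1))"
  proof -
    have "x^(2*n - 1) * x^(2*n - 1) = x^2 * (x^2)^(n - 1) * (x^2)^(n - 1)"
      using n by (cases n) (simp_all add: power_mult[symmetric] power_add[symmetric] mult_2)
    moreover have "A^n = A * A^(n - 1)" "B^n = B * B^(n - 1)" using n by (cases n; simp)+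
    ultimately show ?thesis
      unfolding Kcoord_def A_def[symmetric] B_def[symmetric] by (simp add: power_divide ac_simps)
  qed
  also have "\<dots> \<le> x^2 / (A * B) * (1 * 1)"
    using \<open>0 < A\<close> \<open>0 < B\<close> \<open>x^2 \<le> A\<close> \<open>x^2 \<le> B\<close>
    by (intro mult_left_mono mult_mono power_le_one) auto
  finally show ?thesis by (simp add: A_def B_def)
qed

lemma Kcoord_triangle_sum_le:
  fixes p1 p2 q1 q2 :: real
  assumes n: "n \<ge> 1"
    and p: "p1 \<noteq> 0 \<or> p2 \<noteq> 0" and q: "q1 \<noteq> 0 \<or> q2 \<noteq> 0"
    and r: "p1 + q1 \<noteq> 0 \<or> p2 + q2 \<noteq> 0"
  shows "Kcoord n (p1 + q1) (p2 + q2) * (Kcoord n p1 p2 + Kcoord n q1 q2) - Kcoord n p1 p2 * Kcoord n q1 q2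
    \<le> 2 * real n^2 * ((p1 * q2 - p2 * q1)^2 / ((p1^2 + p2^2) * (q1^2 + q2^2) * ((p1 + q1)^2 + (p2 + q2)^2)))"
    (is "?lhs \<le> 2 * real n^2 * ?c")
proof -
  have c_nonneg: "0 \<le> ?c" by simp
  have "1 \<le> real n^2" using n by (simp add: one_le_power)
  then have "1 \<le> 2 * real n^2" by linarith
  then have c_le: "?c \<le> 2 * real n^2 * ?c"
    using mult_right_mono[OF _ c_nonneg] by fastforce
  have nz: "x \<noteq> 0 \<or> y \<noteq> 0 \<Longrightarrow> x^2 + y^2 \<noteq> 0" for x y :: real by simp
  consider "p1 = 0" | "q1 = 0" | "p1 + q1 = 0" | "p1 \<noteq> 0" "q1 \<noteq> 0" "p1 + q1 \<noteq> 0" by blast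
  then show ?thesis
  proof cases
    case 1
    then have "?lhs = Kcoord n q1 (p2 + q2) * Kcoord n q1 q2" using n by simp
    also have "\<dots> \<le> q1^2 / ((q1^2 + (p2 + q2)^2) * (q1^2 + q2^2))"
      using 1 r q by (intro Kcoord_mul_Kcoord_same_first_le n nz) auto
    also have "\<dots> = ?c" using 1 p by (simp add: power_mult_distrib)
    finally show ?thesis using c_le by linarith
  next
    case 2
    then have "?lhs = Kcoord n p1 (p2 + q2) * Kcoord n p1 p2" using n by simp
    also have "\<dots> \<le> p1^2 / ((p1^2 + (p2 + q2)^2) * (p1^2 + p2^2))"
      using 2 r p by (intro Kcoord_mul_Kcoord_same_first_le n nz) auto
    also have "\<dots> = ?c" using 2 q by (simp add: power_mult_distrib)
    finally show ?thesis using c_le by linarith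
  next
    case 3
    then have "q1 = - p1" by simp
    then have "?lhs = Kcoord n p1 p2 * Kcoord n p1 q2" using n by (simp add: Kcoord_uminus)
    also have "\<dots> \<le> p1^2 / ((p1^2 + p2^2) * (p1^2 + q2^2))"
      using \<open>q1 = - p1\<close> p q by (intro Kcoord_mul_Kcoord_same_first_le n nz) auto
    also have "\<dots> = (p2 + q2)^2 * p1^2 / ((p2 + q2)^2 * ((p1^2 + p2^2) * (p1^2 + q2^2)))"
      using 3 r by simp
    also have "\<dots> = ?c"
      using \<open>q1 = - p1\<close> by (simp add: power_mult_distrib algebra_simps power2_eq_square)
    finally show ?thesis using c_le by linarith
  next
    case 4
    define s t u where "s = p2 / p1" and "t = q2 / q1" and "u = (p2 + q2) / (p1 + q1)"
    have pos: "0 < ((1 + s^2) * (1 + t^2) * (1 + u^2))^(n - 1)"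
      by (intro zero_less_power mult_pos_pos) (simp_all add: add_pos_nonneg)
    have dd_le: "divided_diff2 (\<lambda>v. (1 + v^2)^n) s t u / ((1 + s^2) * (1 + t^2) * (1 + u^2))^(n - 1)
        \<le> 2 * real n^2"
      unfolding pos_divide_le_eq[OF pos] by (rule divided_diff2_one_plus_sq_power_le)
    have "?lhs = ?c * (divided_diff2 (\<lambda>v. (1 + v^2)^n) s t u
        / ((1 + s^2) * (1 + t^2) * (1 + u^2))^(n - 1))"
      unfolding s_def t_def u_def by (rule Kcoord_triangle_sum_eq[OF n 4])
    also have "\<dots> \<le> ?c * (2 * real n^2)" using dd_le c_nonneg by (rule mult_left_mono)
    finally show ?thesis by (simp only: mult.commute)
  qed
qed

lemma norm_sq_vec2:
  fixes x :: "real^2" and i k :: 2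
  assumes "i \<noteq> k"
  shows "norm x ^ 2 = x$i ^ 2 + x$k ^ 2"
proof -
  have "norm x ^ 2 = x$1 ^ 2 + x$2 ^ 2"
    unfolding power2_norm_eq_inner inner_vec_def sum_2 by (simp add: power2_eq_square)
  then show ?thesis using assms exhaust_2[of i] exhaust_2[of k] by auto
qed

definition cross2 :: "real^2 \<Rightarrow> real^2 \<Rightarrow> real" where
  "cross2 x y = x$1 * y$2 - x$2 * y$1"

lemma cross2_sq_eq:
  fixes x y :: "real^2" and i k :: 2
  assumes "i \<noteq> k"
  shows "cross2 x y ^ 2 = (x$i * y$k - x$k * y$i) ^ 2"
  using assms exhaust_2[of i] exhaust_2[of k] by (auto simp: cross2_def power2_eq_square algebra_simps)

lemma circumradius_sq:
  fixes a b v :: "real^2"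
  assumes D: "cross2 a b \<noteq> 0" and va: "norm (v - a) = norm v" and vb: "norm (v - b) = norm v"
  shows "norm v ^ 2 = norm a ^ 2 * norm b ^ 2 * norm (a - b) ^ 2 / (4 * cross2 a b ^ 2)"
proof -
  have norm_sq: "norm x ^ 2 = x$1 ^ 2 + x$2 ^ 2" for x :: "real^2" by (rule norm_sq_vec2) simp
  have "norm (v - a) ^ 2 = norm v ^ 2" "norm (v - b) ^ 2 = norm v ^ 2" using va vb by simp_all
  then have "2 * (v$1 * a$1 + v$2 * a$2) = a$1^2 + a$2^2" "2 * (v$1 * b$1 + v$2 * b$2) = b$1^2 + b$2^2"
    unfolding norm_sq by (simp_all add: algebra_simps power2_eq_square)
  then have "(2 * cross2 a b)^2 * (v$1^2 + v$2^2)
      = (a$1^2 + a$2^2) * (b$1^2 + b$2^2) * ((a$1 - b$1)^2 + (a$2 - b$2)^2)"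
    unfolding cross2_def by algebra
  then show ?thesis using D unfolding norm_sq by (simp add: field_simps)
qed

lemma circumcentre_exists:
  fixes a b :: "real^2"
  assumes D: "cross2 a b \<noteq> 0"
  shows "\<exists>v. norm (v - a) = norm v \<and> norm (v - b) = norm v"
proof -
  have norm_sq: "norm x ^ 2 = x$1 ^ 2 + x$2 ^ 2" for x :: "real^2" by (rule norm_sq_vec2) simp
  define A B where "A = a$1^2 + a$2^2" and "B = b$1^2 + b$2^2"
  define v :: "real^2" where
    "v = vector [(A * b$2 - B * a$2) / (2 * cross2 a b), (B * a$1 - A * b$1) / (2 * cross2 a b)]"
  have "v$1 * a$1 + v$2 * a$2 = A * cross2 a b / (2 * cross2 a b)"
    "v$1 * b$1 + v$2 * b$2 = B * cross2 a b / (2 * cross2 a b)"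
    unfolding v_def cross2_def by (simp_all add: add_divide_distrib[symmetric] algebra_simps)
  then have "2 * (v$1 * a$1 + v$2 * a$2) = A" "2 * (v$1 * b$1 + v$2 * b$2) = B"
    using D by simp_all
  then have "norm (v - a) ^ 2 = norm v ^ 2" "norm (v - b) ^ 2 = norm v ^ 2"
    unfolding norm_sq A_def B_def by (simp_all add: algebra_simps power2_eq_square)
  then show ?thesis by (intro exI[of _ v]) (simp add: power2_eq_iff_nonneg)
qed

lemma collinear_0_iff_cross2_eq_0:
  fixes a b :: "real^2"
  shows "collinear {0, a, b} \<longleftrightarrow> cross2 a b = 0"
proof
  assume "collinear {0, a, b}"
  then consider "a = 0" | "b = 0" | c where "b = c *\<^sub>R a" by (auto simp: collinear_lemma)
  then show "cross2 a b = 0" by cases (auto simp: cross2_def)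
next
  assume D: "cross2 a b = 0"
  have "a = 0 \<or> (\<exists>c. b = c *\<^sub>R a)"
  proof (cases "a$1 = 0")
    case True
    show ?thesis
    proof (cases "a$2 = 0")
      case False
      with True D have "b = (b$2 / a$2) *\<^sub>R a"
        by (auto simp: vec_eq_iff forall_2 cross2_def field_simps)
      then show ?thesis by blast
    qed (use True in \<open>auto simp: vec_eq_iff forall_2\<close>)
  next
    case False
    with D have "b = (b$1 / a$1) *\<^sub>R a"
      by (auto simp: vec_eq_iff forall_2 cross2_def field_simps)
    then show ?thesis by blast
  qed
  then show "collinear {0, a, b}" by (auto simp: collinear_lemma)
qed

lemma menger_sq_eq:
  fixes z1 z2 z3 :: "real^2"
  defines "a \<equiv> z1 - z3" and "b \<equiv> z2 - z3"
  shows "menger z1 z2 z3 ^ 2 = 4 * cross2 a b ^ 2 / (norm a ^ 2 * norm b ^ 2 * norm (a - b) ^ 2)"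
proof (cases "cross2 a b = 0")
  case True
  have "collinear {z1, z2, z3}"
    using collinear_3[of z1 z3 z2] True collinear_0_iff_cross2_eq_0[of a b]
    by (simp add: a_def b_def insert_commute)
  with True show ?thesis by (simp add: menger_def)
next
  case False
  have "\<not> collinear {z1, z2, z3}"
    using collinear_3[of z1 z3 z2] False collinear_0_iff_cross2_eq_0[of a b]
    by (simp add: a_def b_def insert_commute)
  define R where "R = sqrt (norm a ^ 2 * norm b ^ 2 * norm (a - b) ^ 2 / (4 * cross2 a b ^ 2))"
  have dist_eq: "dist x z1 = norm (x - z3 - a)" "dist x z2 = norm (x - z3 - b)" "dist x z3 = norm (x - z3)"
    for x by (simp_all add: a_def b_def dist_norm algebra_simps)
  have "(THE r. \<exists>x. dist x z1 = r \<and> dist x z2 = r \<and> dist x z3 = r) = R"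
  proof (rule the_equality)
    obtain v where v: "norm (v - a) = norm v" "norm (v - b) = norm v"
      using circumcentre_exists[OF False] by blast
    have "norm v = R"
      unfolding R_def by (rule real_sqrt_unique[symmetric]) (simp_all add: circumradius_sq[OF False v])
    with v show "\<exists>x. dist x z1 = R \<and> dist x z2 = R \<and> dist x z3 = R"
      unfolding dist_eq by (intro exI[of _ "z3 + v"]) simp
  next
    fix r assume "\<exists>x. dist x z1 = r \<and> dist x z2 = r \<and> dist x z3 = r"
    then obtain x where x: "norm (x - z3 - a) = r" "norm (x - z3 - b) = r" "norm (x - z3) = r"
      unfolding dist_eq by blast
    then have "norm (x - z3) ^ 2 = norm a ^ 2 * norm b ^ 2 * norm (a - b) ^ 2 / (4 * cross2 a b ^ 2)"
      by (intro circumradius_sq[OF False]) simp_all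
    with x(3) show "r = R"
      unfolding R_def by (intro real_sqrt_unique[symmetric]) auto
  qed
  then have "menger z1 z2 z3 = 1 / R"
    using \<open>\<not> collinear {z1, z2, z3}\<close> by (simp add: menger_def)
  then show ?thesis by (simp add: R_def power_divide)
qed

lemma Kker_eq_Kcoord: "i \<noteq> k \<Longrightarrow> Kker n i x = Kcoord n (x$i) (x$k)"
  by (simp add: Kker_def Kcoord_def power_mult norm_sq_vec2)

lemma Kker_uminus: "n \<ge> 1 \<Longrightarrow> Kker n i (- x) = - Kker n i x"
  by (simp add: Kker_def power_minus_odd)

lemma pfun_eq_Kcoord_triangle_sum:
  fixes z1 z2 z3 :: "real^2" and i k :: 2
  assumes n: "n \<ge> 1" and ik: "i \<noteq> k"
  defines "p \<equiv> z1 - z3" and "q \<equiv> z3 - z2"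
  shows "pfun n i z1 z2 z3
    = Kcoord n (p$i + q$i) (p$k + q$k) * (Kcoord n (p$i) (p$k) + Kcoord n (q$i) (q$k))
      - Kcoord n (p$i) (p$k) * Kcoord n (q$i) (q$k)"
proof -
  have diffs: "z1 - z2 = p + q" "z1 - z3 = p" "z2 - z1 = - (p + q)" "z2 - z3 = - q"
    "z3 - z1 = - p" "z3 - z2 = q"
    by (simp_all add: p_def q_def)
  have "pfun n i z1 z2 z3
      = Kker n i (p + q) * (Kker n i p + Kker n i q) - Kker n i p * Kker n i q"
    unfolding pfun_def diffs Kker_uminus[OF n] by (simp add: algebra_simps)
  then show ?thesis by (simp add: Kker_eq_Kcoord[OF ik])
qed

lemma pfun_le_cross2:
  fixes z1 z2 z3 :: "real^2" and i :: 2
  assumes n: "n \<ge> 1" and distinct: "z1 \<noteq> z2" "z1 \<noteq> z3" "z2 \<noteq> z3"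
  defines "p \<equiv> z1 - z3" and "q \<equiv> z3 - z2"
  shows "pfun n i z1 z2 z3 \<le> 2 * real n^2 * (cross2 p q ^ 2 / (norm p ^ 2 * norm q ^ 2 * norm (p + q) ^ 2))"
proof -
  obtain k :: 2 where ik: "i \<noteq> k" by (metis exhaust_2 num.distinct(1) one_neq_zero)
  have nz: "x$i \<noteq> 0 \<or> x$k \<noteq> 0" if "x \<noteq> 0" for x :: "real^2"
    using that ik exhaust_2[of i] exhaust_2[of k] by (auto simp: vec_eq_iff forall_2)
  have ne: "z1 - z3 \<noteq> 0" "z3 - z2 \<noteq> 0" "z1 - z3 + (z3 - z2) \<noteq> 0" using distinct by simp_all
  have "pfun n i z1 z2 z3 \<le> 2 * real n^2 * ((p$i * q$k - p$k * q$i)^2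
      / ((p$i^2 + p$k^2) * (q$i^2 + q$k^2) * ((p$i + q$i)^2 + (p$k + q$k)^2)))"
    unfolding pfun_eq_Kcoord_triangle_sum[OF n ik] p_def q_def
    using nz[OF ne(1)] nz[OF ne(2)] nz[OF ne(3)] by (intro Kcoord_triangle_sum_le n) simp_all
  then show ?thesis
    by (simp add: norm_sq_vec2[OF ik] cross2_sq_eq[OF ik])
qed

theorem lemma2p2:
  fixes n :: nat
  assumes "n \<ge> 1"
  shows "\<exists>C>0. \<forall>z1 z2 z3 :: real^2. \<forall>i :: 2.
           z1 \<noteq> z2 \<and> z1 \<noteq> z3 \<and> z2 \<noteq> z3 \<longrightarrow>
           pfun n i z1 z2 z3 \<le> C * (menger z1 z2 z3)^2"
proof (intro exI[of _ "real n^2 / 2"] conjI allI impI)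
  show "real n^2 / 2 > 0" using assms by simp
  fix z1 z2 z3 :: "real^2" and i :: 2
  assume "z1 \<noteq> z2 \<and> z1 \<noteq> z3 \<and> z2 \<noteq> z3"
  then have "pfun n i z1 z2 z3 \<le> 2 * real n^2 * (cross2 (z1 - z3) (z3 - z2) ^ 2
      / (norm (z1 - z3) ^ 2 * norm (z3 - z2) ^ 2 * norm (z1 - z2) ^ 2))"
    using pfun_le_cross2[OF assms] by simp
  also have "\<dots> = real n^2 / 2 * menger z1 z2 z3 ^ 2"
    unfolding menger_sq_eq by (simp add: cross2_def norm_minus_commute algebra_simps power2_eq_square)
  finally show "pfun n i z1 z2 z3 \<le> real n^2 / 2 * menger z1 z2 z3 ^ 2" .
qed

end
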